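(* Let \[ \mathscr{E}_n=-\int_0^\infty\frac{2y}{\sinh^3 y}\Bigl(\int_0^y\frac{t\sinh t}{t^2+\pi^2n^2}\,dt\Bigr)dy\quad(n\in\mathbb{Z}\setminus\{0\}),\qquad \mathscr{E}_0=\int_0^\infty\frac{2y}{\sinh^3 y}\Bigl(\sinh y-\int_0^y\frac{\sinh t}{t}\,dt\Bigr)dy. \] Then the discrete Hilbert transform of $(\mathscr{E}_n)_{n\in\mathbb{Z}}$, i.e. the sequence $\frac{1}{\pi}\sum_{m\in\mathbb{Z}\setminus\{0\}}\frac{\mathscr{E}_{n-m}}{m}$, equals $(\mathscr{F}_n)_{n\in\mathbb{Z}}$, where \[ \mathscr{F}_n=\frac{1}{\pi n}\int_0^\infty\frac{2y^3}{(y^2+\pi^2n^2)\sinh^2 y}\,dy\quad(n\neq0),\qquad\mathscr{F}_0=0. \] Furthermore, $\mathscr{E}_0>0$, $\mathscr{E}_n<0$ for all $n\neq0$, and the sequence $(\mathscr{E}_n)$ is absolutely summable with $\sum_{n\in\mathbb{Z}}\mathscr{E}_n=0$. *)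

theory Defs
  imports "HOL-Analysis.Analysis"
begin

text \<open>Integrals are Henstock--Kurzweil integrals; \<open>\<int>_0^\<infinity>\<close> is the integral over \<open>{0..}\<close>.\<close>

definition calE :: "int \<Rightarrow> real" where
  "calE n = (if n = 0 then
      integral {0..} (\<lambda>y. 2 * y / (sinh y) ^ 3 *
         (sinh y - integral {0..y} (\<lambda>t. sinh t / t)))
    else
      - integral {0..} (\<lambda>y. 2 * y / (sinh y) ^ 3 *
         integral {0..y} (\<lambda>t. t * sinh t / (t\<^sup>2 + pi\<^sup>2 * (real_of_int n)\<^sup>2))))"

definition calF :: "int \<Rightarrow> real" where
  "calF n = (if n = 0 then 0 else
      1 / (pi * real_of_int n) *
      integral {0..} (\<lambda>y. 2 * y ^ 3 / ((y\<^sup>2 + pi\<^sup>2 * (real_of_int n)\<^sup>2) * (sinh y)\<^sup>2)))"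

end

theory Submission
  imports Defs "HOL-Real_Asymp.Real_Asymp"
begin

text \<open>
  For \<open>t > 0\<close> the partial fraction expansion \<open>\<Sum>\<^sub>k 1/(t\<^sup>2 + \<pi>\<^sup>2k\<^sup>2) = coth t / t\<close> shows that the
  kernels \<open>g\<^sub>k(t) = [k = 0] cosh t - t sinh t / (t\<^sup>2 + \<pi>\<^sup>2k\<^sup>2)\<close> sum to zero over \<open>k \<in> \<int>\<close>, and
  \<open>calE k = \<integral>\<^sub>0\<^sup>\<infinity> 2y/sinh\<^sup>3 y \<integral>\<^sub>0\<^sup>y g\<^sub>k(t) dt dy\<close>. Splitting \<open>1/((n-k)(t\<^sup>2 + \<pi>\<^sup>2k\<^sup>2))\<close> into partial fractions
  in \<open>k\<close> and telescoping evaluates the discrete Hilbert transform of \<open>k \<mapsto> g\<^sub>k(t)\<close> in closed form;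
  it is the derivative of \<open>t\<^sup>2 sinh t / (n (t\<^sup>2 + \<pi>\<^sup>2n\<^sup>2))\<close>, so integrating twice gives \<open>calF n\<close>.
  Both interchanges of sum and integral are justified by dominated convergence, since
  \<open>\<Sum>\<^sub>k \<bar>g\<^sub>k\<bar> = 2 g\<^sub>0\<close>. The signs follow from the elementary bounds
  \<open>t\<^sup>2/3 \<le> g\<^sub>0(t) \<le> t sinh t\<close> and \<open>t sinh t \<ge> t\<^sup>2\<close>.
\<close>

section \<open>Unconditional sums\<close>

lemma has_sum_diff:
  fixes f g :: "'a \<Rightarrow> real"
  assumes "(f has_sum a) A" and "(g has_sum b) A"
  shows "((\<lambda>x. f x - g x) has_sum (a - b)) A"
  using has_sum_add[OF assms(1) has_sum_uminusI[OF assms(2)]] by simp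

lemma has_sum_delta:
  assumes "a \<in> A"
  shows "((\<lambda>k. if k = a then c else 0) has_sum c) A"
  by (rule has_sum_finite_neutralI[of "{a}"]) (use assms in auto)

lemma has_sum_Diff_singleton:
  fixes f :: "'a \<Rightarrow> real"
  assumes "(f has_sum S) A" and "x \<in> A"
  shows "(f has_sum (S - f x)) (A - {x})"
proof -
  obtain S' where S': "(f has_sum S') (A - {x})"
    using assms summable_on_subset by (metis Diff_subset has_sum_imp_summable summable_on_def)
  have "(f has_sum (f x + S')) (insert x (A - {x}))" by (rule has_sum_insert[OF _ S']) auto
  then have "S = f x + S'" using assms has_sum_unique by (metis insert_Diff)
  then show ?thesis using S' by simp
qed

lemma summable_on_real_dominated:
  fixes f g :: "'a \<Rightarrow> real"
  assumes "g summable_on A" and "\<And>x. x \<in> A \<Longrightarrow> \<bar>f x\<bar> \<le> g x"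
  shows "f summable_on A"
  using Infinite_Sum.abs_summable_on_comparison_test'[OF assms(1), of f] assms(2)
    summable_on_iff_abs_summable_on_real[of f A] by simp

lemma has_sum_odd_eq_0:
  fixes f :: "int \<Rightarrow> real"
  assumes sum: "(f has_sum S) A" and symm: "\<And>x. x \<in> A \<Longrightarrow> - x \<in> A" and odd: "\<And>x. f (- x) = - f x"
  shows "S = 0"
proof -
  have "uminus ` A = A"
    using symm by (auto intro!: image_eqI[where x="- _"])
  then have "((f \<circ> uminus) has_sum S) A" using sum has_sum_reindex[of uminus A f S] by simp
  then have "(f has_sum - S) A" using has_sum_uminus by (fastforce simp: o_def odd)
  then show ?thesis using sum has_sum_unique by fastforce
qed

lemma has_sum_imp_symmetric_partial_sums:
  fixes f :: "int \<Rightarrow> real"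
  assumes "(f has_sum S) UNIV"
  shows "(\<lambda>N::nat. sum f {- int N..int N}) \<longlonglongrightarrow> S"
proof -
  have "filterlim (\<lambda>N::nat. {- int N..int N}) (finite_subsets_at_top UNIV) sequentially"
  proof (subst filterlim_finite_subsets_at_top, intro allI impI)
    fix X :: "int set" assume X: "finite X \<and> X \<subseteq> UNIV"
    then obtain M where M: "\<And>x. x \<in> X \<Longrightarrow> \<bar>x\<bar> \<le> M"
      using bdd_above_finite[of "abs ` X"] by (auto simp: bdd_above_def)
    show "\<forall>\<^sub>F N in sequentially. finite {- int N..int N} \<and> X \<subseteq> {- int N..int N} \<and> {- int N..int N} \<subseteq> UNIV"
      using eventually_ge_at_top[of "nat M"] by eventually_elim (auto dest!: M)
  qed
  then show ?thesis
    using filterlim_compose[of "sum f"] assms by (auto simp: has_sum_def o_def)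
qed

lemma sum_telescope_int_symmetric:
  fixes p :: "int \<Rightarrow> real"
  shows "(\<Sum>k\<in>{- int N..int N}. p k - p (k - 1)) = p (int N) - p (- int N - 1)"
proof (induction N)
  case (Suc N)
  have "{- int (Suc N)..int (Suc N)} = insert (int N + 1) (insert (- int N - 1) {- int N..int N})"
    by auto
  then show ?case
    using Suc arg_cong[where f=p, of "- int N - 2" "- int (Suc N) - 1"] by (simp add: algebra_simps)
qed simp

lemma telescoping_has_sum_0:
  fixes p :: "int \<Rightarrow> real"
  assumes "(\<lambda>k. p k - p (k - 1)) summable_on UNIV"
    and "(\<lambda>N::nat. p (int N)) \<longlonglongrightarrow> 0" and "(\<lambda>N::nat. p (- int N)) \<longlonglongrightarrow> 0"
  shows "((\<lambda>k. p k - p (k - 1)) has_sum 0) UNIV"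
proof -
  obtain S where S: "((\<lambda>k. p k - p (k - 1)) has_sum S) UNIV"
    using assms(1) by (auto simp: summable_on_def)
  have "(\<lambda>N::nat. p (- int (Suc N))) \<longlonglongrightarrow> 0" using assms(3) by (rule LIMSEQ_Suc)
  moreover have "(\<lambda>N::nat. p (- int (Suc N))) = (\<lambda>N. p (- int N - 1))"
    by (intro ext arg_cong[where f=p]) simp
  ultimately have "(\<lambda>N::nat. p (int N) - p (- int N - 1)) \<longlonglongrightarrow> 0 - 0"
    using assms(2) by (intro tendsto_diff) simp_all
  moreover have "(\<lambda>N::nat. p (int N) - p (- int N - 1)) \<longlonglongrightarrow> S"
    using has_sum_imp_symmetric_partial_sums[OF S] by (simp add: sum_telescope_int_symmetric)
  ultimately show ?thesis using S LIMSEQ_unique by fastforce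
qed

lemma telescoping_shift_has_sum_0:
  fixes p :: "int \<Rightarrow> real"
  assumes "((\<lambda>k. p k - p (k - 1)) has_sum 0) UNIV"
  shows "((\<lambda>k. p k - p (k - int n)) has_sum 0) UNIV"
proof (induction n)
  case (Suc n)
  have "((\<lambda>k. p k - p (k - 1)) has_sum 0) UNIV \<longleftrightarrow> ((\<lambda>k. p (k - int n) - p (k - int n - 1)) has_sum 0) UNIV"
    by (rule has_sum_reindex_bij_witness[where j="\<lambda>k. k + int n" and i="\<lambda>k. k - int n"]) auto
  with assms have "((\<lambda>k. p (k - int n) - p (k - int n - 1)) has_sum 0) UNIV" by simp
  from has_sum_add[OF Suc this] show ?case by (simp add: algebra_simps)
qed simp

section \<open>Interchanging unconditional sums and integrals\<close>

lemma summable_on_integral_dominated: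
  fixes \<phi> :: "'a \<Rightarrow> real \<Rightarrow> real"
  assumes int: "\<And>k. k \<in> A \<Longrightarrow> \<phi> k integrable_on D" and h: "h integrable_on D"
    and bound: "\<And>x F. x \<in> D \<Longrightarrow> finite F \<Longrightarrow> F \<subseteq> A \<Longrightarrow> (\<Sum>k\<in>F. \<bar>\<phi> k x\<bar>) \<le> h x"
  shows "(\<lambda>k. integral D (\<phi> k)) summable_on A"
proof -
  have abs_int: "(\<lambda>x. \<bar>\<phi> k x\<bar>) integrable_on D" if "k \<in> A" for k
    using absolutely_integrable_integrable_bound[OF _ int[OF that] h] bound[of _ "{k}"] that
    by (simp add: absolutely_integrable_on_def)
  have "(\<Sum>k\<in>F. \<bar>integral D (\<phi> k)\<bar>) \<le> integral D h" if F: "finite F" "F \<subseteq> A" for F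
  proof -
    have "(\<Sum>k\<in>F. \<bar>integral D (\<phi> k)\<bar>) \<le> (\<Sum>k\<in>F. integral D (\<lambda>x. \<bar>\<phi> k x\<bar>))"
      using integral_norm_bound_integral[OF int abs_int] F by (intro sum_mono) auto
    also have "\<dots> = integral D (\<lambda>x. \<Sum>k\<in>F. \<bar>\<phi> k x\<bar>)"
      using F abs_int by (subst integral_sum) auto
    also have "\<dots> \<le> integral D h"
      by (rule integral_le) (use F abs_int h bound in \<open>auto intro!: integrable_sum\<close>)
    finally show ?thesis .
  qed
  then have "(\<lambda>k. \<bar>integral D (\<phi> k)\<bar>) summable_on A"
    by (intro nonneg_bdd_above_summable_on bdd_aboveI2) auto
  then show ?thesis using summable_on_iff_abs_summable_on_real by force
qed

lemma has_sum_integral_dominated: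
  fixes \<phi> :: "'a \<Rightarrow> real \<Rightarrow> real"
  assumes A: "countable A" "infinite A"
    and int: "\<And>k. k \<in> A \<Longrightarrow> \<phi> k integrable_on D" and h: "h integrable_on D"
    and bound: "\<And>x F. x \<in> D \<Longrightarrow> finite F \<Longrightarrow> F \<subseteq> A \<Longrightarrow> (\<Sum>k\<in>F. \<bar>\<phi> k x\<bar>) \<le> h x"
    and N: "negligible N"
    and lim: "\<And>x. x \<in> D - N \<Longrightarrow> ((\<lambda>k. \<phi> k x) has_sum \<Phi> x) A"
  shows "((\<lambda>k. integral D (\<phi> k)) has_sum integral D \<Phi>) A"
proof -
  obtain S where S: "((\<lambda>k. integral D (\<phi> k)) has_sum S) A"
    using summable_on_integral_dominated[OF int h bound] by (auto simp: summable_on_def)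
  define e where "e = from_nat_into A"
  have bij: "bij_betw e UNIV A" unfolding e_def by (rule bij_betw_from_nat_into[OF A])
  then have eA: "e i \<in> A" and inj_e: "inj e" for i by (auto simp: bij_betw_def)
  have spike: "integral (D - N) f = integral D f" and spike_int: "f integrable_on D \<Longrightarrow> f integrable_on (D - N)"
    for f :: "real \<Rightarrow> real"
    by (auto intro: integral_spike_set integrable_spike_set negligible_subset[OF N])
  define P where "P m x = (\<Sum>i<m. \<phi> (e i) x)" for m x
  have "(\<lambda>m. integral (D - N) (P m)) \<longlonglongrightarrow> integral (D - N) \<Phi>"
  proof (rule dominated_convergence(2))
    show "P m integrable_on (D - N)" for m
      unfolding P_def by (intro spike_int integrable_sum int eA) auto
    show "h integrable_on (D - N)" by (rule spike_int[OF h])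
    show "norm (P m x) \<le> h x" if "x \<in> D - N" for m x
    proof -
      have "norm (P m x) \<le> (\<Sum>k\<in>e ` {..<m}. \<bar>\<phi> k x\<bar>)"
        using inj_e unfolding P_def by (subst sum.reindex) (auto intro: inj_on_subset simp: sum_abs)
      also have "\<dots> \<le> h x" using that eA by (intro bound) auto
      finally show ?thesis .
    qed
    show "(\<lambda>m. P m x) \<longlonglongrightarrow> \<Phi> x" if "x \<in> D - N" for x
    proof -
      have "((\<lambda>i. \<phi> (e i) x) has_sum \<Phi> x) UNIV"
        using has_sum_reindex_bij_betw[OF bij, of "\<lambda>k. \<phi> k x"] lim[OF that] by simp
      then show ?thesis by (auto simp: sums_def P_def dest: has_sum_imp_sums)
    qed
  qed
  moreover have "integral (D - N) (P m) = (\<Sum>i<m. integral D (\<phi> (e i)))" for m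
    unfolding spike P_def by (rule integral_sum) (auto intro: int eA)
  ultimately have "(\<lambda>i. integral D (\<phi> (e i))) sums integral D \<Phi>"
    by (simp add: spike sums_def)
  moreover have "(\<lambda>i. integral D (\<phi> (e i))) sums S"
    using has_sum_reindex_bij_betw[OF bij, of "\<lambda>k. integral D (\<phi> k)"] S by (simp add: has_sum_imp_sums)
  ultimately show ?thesis using S sums_unique2 by metis
qed

section \<open>Partial fractions of the hyperbolic cotangent\<close>

lemma Digamma_reflection_complex:
  fixes z :: complex
  assumes z: "z \<notin> \<int>"
  shows "Digamma z - Digamma (1 - z) = - of_real pi * cot (of_real pi * z)"
proof -
  have "1 - z \<notin> \<int>" using z Ints_diff[of 1 "1 - z"] by auto
  then have nonpos: "z \<notin> \<int>\<^sub>\<le>\<^sub>0" "1 - z \<notin> \<int>\<^sub>\<le>\<^sub>0" using z nonpos_Ints_subset_Ints by auto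
  have sin_nz: "sin (of_real pi * z) \<noteq> 0" using z by (subst sin_eq_0) auto
  have G: "Gamma z * Gamma (1 - z) = of_real pi / sin (of_real pi * z)"
    by (rule Gamma_reflection_complex)
  have "eventually (\<lambda>x. x \<in> - (\<int>::complex set)) (nhds z)"
    using z by (intro eventually_nhds_in_open) auto
  then have ev: "eventually (\<lambda>x. Gamma x * Gamma (1 - x) = of_real pi / sin (of_real pi * x)) (nhds z)"
    by eventually_elim (rule Gamma_reflection_complex)
  text \<open>Differentiate the reflection formula for \<open>\<Gamma>\<close> and divide by it.\<close>
  have "((\<lambda>x. Gamma x * Gamma (1 - x)) has_field_derivative
      Gamma z * Gamma (1 - z) * (Digamma z - Digamma (1 - z))) (at z)"
    using nonpos by (auto intro!: derivative_eq_intros simp: algebra_simps)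
  then have "((\<lambda>x. of_real pi / sin (of_real pi * x)) has_field_derivative
      Gamma z * Gamma (1 - z) * (Digamma z - Digamma (1 - z))) (at z)"
    by (subst (asm) DERIV_cong_ev[OF refl ev refl])
  moreover have "((\<lambda>x. of_real pi / sin (of_real pi * x)) has_field_derivative
      (- (of_real pi * (cos (of_real pi * z) * of_real pi)) / (sin (of_real pi * z))\<^sup>2)) (at z)"
    using sin_nz by (auto intro!: derivative_eq_intros simp: power2_eq_square)
  ultimately have "Gamma z * Gamma (1 - z) * (Digamma z - Digamma (1 - z))
      = (of_real pi / sin (of_real pi * z)) * (- of_real pi * cot (of_real pi * z))"
    using sin_nz by (auto dest: DERIV_unique simp: cot_def field_simps power2_eq_square)
  moreover have "Gamma z * Gamma (1 - z) \<noteq> 0" using G sin_nz by simp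
  ultimately show ?thesis unfolding G by (metis mult_left_cancel)
qed

lemma cos_i_times_real: "cos (\<i> * complex_of_real x) = complex_of_real (cosh x)"
  by (simp add: cosh_complex[symmetric] cosh_def exp_of_real exp_minus)

lemma sin_i_times_real: "sin (\<i> * complex_of_real x) = \<i> * complex_of_real (sinh x)"
  using sin_i_times[of "complex_of_real x"] by (simp add: sinh_def exp_of_real exp_minus)

text \<open>The imaginary part of the Digamma series at \<open>z = \<i> t / \<pi>\<close>, paired as the terms \<open>k + 1\<close> and \<open>-k\<close>.\<close>

lemma coth_partial_fractions_sums:
  fixes t :: real
  assumes t: "t > 0"
  shows "(\<lambda>k::nat. 1 / (t\<^sup>2 + pi\<^sup>2 * (real (Suc k))\<^sup>2) + 1 / (t\<^sup>2 + pi\<^sup>2 * (real k)\<^sup>2))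
           sums (cosh t / (t * sinh t))"
proof -
  define s where "s = t / pi"
  have s: "s > 0" using t by (simp add: s_def)
  define z where "z = \<i> * complex_of_real s"
  have z: "z \<notin> \<int>" using s by (simp add: z_def complex_is_Int_iff)
  then have "z \<noteq> 0" "1 - z \<noteq> 0" by (metis Ints_0, metis Ints_1 right_minus_eq)
  then have "(\<lambda>k. inverse (of_nat (Suc k)) - inverse (z + of_nat k)) sums (Digamma z + euler_mascheroni)"
    "(\<lambda>k. inverse (of_nat (Suc k)) - inverse ((1 - z) + of_nat k)) sums (Digamma (1 - z) + euler_mascheroni)"
    using summable_Digamma[of z] summable_Digamma[of "1 - z"] by (simp_all add: Digamma_def summable_sums)
  from sums_Im[OF sums_diff[OF this]]
  have "(\<lambda>k. Im (inverse ((1 - z) + of_nat k)) - Im (inverse (z + of_nat k))) sums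
       Im (- of_real pi * cot (of_real pi * z))"
    using Digamma_reflection_complex[OF z] by simp
  moreover have "Im (- of_real pi * cot (of_real pi * z)) = pi * cosh t / sinh t"
    using t by (simp add: s_def z_def cot_def cos_i_times_real sin_i_times_real Im_divide power2_eq_square)
  moreover have "Im (inverse ((1 - z) + of_nat k)) = pi * t / (t\<^sup>2 + pi\<^sup>2 * (real (Suc k))\<^sup>2)"
    "Im (inverse (z + of_nat k)) = - (pi * t / (t\<^sup>2 + pi\<^sup>2 * (real k)\<^sup>2))" for k
    using t by (simp_all add: z_def s_def inverse_eq_divide Im_divide field_simps power2_eq_square)
  ultimately have "(\<lambda>k. pi * t * (1 / (t\<^sup>2 + pi\<^sup>2 * (real (Suc k))\<^sup>2) + 1 / (t\<^sup>2 + pi\<^sup>2 * (real k)\<^sup>2)))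
      sums (pi * t * (cosh t / (t * sinh t)))"
    using t by (simp add: algebra_simps)
  from sums_mult[OF this, of "1 / (pi * t)"] show ?thesis using t by simp
qed

text \<open>\<open>pole_dist_sq t k = \<bar>t - \<i>\<pi>k\<bar>\<^sup>2\<close>, where \<open>\<i>\<pi>k\<close> runs through the poles of \<open>coth\<close>.\<close>

definition pole_dist_sq :: "real \<Rightarrow> int \<Rightarrow> real" where
  "pole_dist_sq t k = t\<^sup>2 + pi\<^sup>2 * (real_of_int k)\<^sup>2"

lemma pole_dist_sq_nonneg: "pole_dist_sq t k \<ge> 0"
  by (simp add: pole_dist_sq_def)

lemma pole_dist_sq_pos: "t \<noteq> 0 \<or> k \<noteq> 0 \<Longrightarrow> pole_dist_sq t k > 0"
  by (auto simp: pole_dist_sq_def add_pos_nonneg add_nonneg_pos)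

lemma pole_dist_sq_mono: "0 \<le> s \<Longrightarrow> s \<le> t \<Longrightarrow> pole_dist_sq s k \<le> pole_dist_sq t k"
  by (simp add: pole_dist_sq_def power_mono)

lemma coth_partial_fractions:
  fixes t :: real
  assumes t: "t > 0"
  shows "((\<lambda>k. 1 / pole_dist_sq t k) has_sum (cosh t / (t * sinh t))) UNIV"
proof -
  define a where "a k = 1 / (t\<^sup>2 + pi\<^sup>2 * (real k)\<^sup>2)" for k :: nat
  define b where "b k = 1 / (t\<^sup>2 + pi\<^sup>2 * (real (Suc k))\<^sup>2)" for k :: nat
  have S: "(\<lambda>k. b k + a k) sums (cosh t / (t * sinh t))"
    using coth_partial_fractions_sums[OF t] by (simp add: a_def b_def)
  have nonneg: "a k \<ge> 0" "b k \<ge> 0" for k by (simp_all add: a_def b_def)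
  have "summable a" "summable b"
    by (rule summable_comparison_test[of _ "\<lambda>k. b k + a k"], use nonneg S in \<open>auto intro: sums_summable\<close>)+
  then have sum: "suminf b + suminf a = cosh t / (t * sinh t)"
    using S by (metis suminf_add sums_unique)
  have ha: "(a has_sum suminf a) UNIV" and hb: "(b has_sum suminf b) UNIV"
    using \<open>summable a\<close> \<open>summable b\<close> nonneg by (auto simp: summable_sums intro!: sums_nonneg_imp_has_sum)
  have "(a has_sum suminf a) UNIV \<longleftrightarrow> ((\<lambda>k. 1 / pole_dist_sq t k) has_sum suminf a) (range int)"
    by (rule has_sum_reindex_bij_witness[where j=int and i=nat]) (auto simp: a_def pole_dist_sq_def)
  moreover have "(b has_sum suminf b) UNIV \<longleftrightarrow>
      ((\<lambda>k. 1 / pole_dist_sq t k) has_sum suminf b) (range (\<lambda>n. - int n - 1))"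
    by (rule has_sum_reindex_bij_witness[where i="\<lambda>k. nat (- k - 1)" and j="\<lambda>n. - int n - 1"])
       (auto simp: b_def pole_dist_sq_def power2_eq_square algebra_simps)
  ultimately have "((\<lambda>k. 1 / pole_dist_sq t k) has_sum (suminf a + suminf b))
      (range int \<union> range (\<lambda>n. - int n - 1))"
    using ha hb by (intro has_sum_Un_disjoint) auto
  moreover have "range int \<union> range (\<lambda>n. - int n - 1) = (UNIV :: int set)"
  proof -
    have "k \<in> range int \<or> k \<in> range (\<lambda>n. - int n - 1)" for k :: int
    proof (cases "k \<ge> 0")
      case False
      then have "k = - int (nat (- k - 1)) - 1" by simp
      then show ?thesis by (metis rangeI)
    qed (metis nonneg_int_cases rangeI)
    then show ?thesis by auto
  qed
  ultimately show ?thesis using sum by (simp add: add.commute)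
qed

section \<open>A discrete Hilbert transform of \<open>1 / pole_dist_sq\<close>\<close>

definition odd_pole_term :: "real \<Rightarrow> int \<Rightarrow> real" where
  "odd_pole_term t k = pi\<^sup>2 * real_of_int k / pole_dist_sq t k"

lemma odd_pole_term_minus: "odd_pole_term t (- k) = - odd_pole_term t k"
  by (simp add: odd_pole_term_def pole_dist_sq_def)

lemma odd_pole_term_tendsto_0: "(\<lambda>N::nat. odd_pole_term t (int N)) \<longlonglongrightarrow> 0"
proof -
  have "(\<lambda>N::nat. pi\<^sup>2 * real N / (t\<^sup>2 + pi\<^sup>2 * (real N)\<^sup>2)) \<longlonglongrightarrow> 0"
    by real_asymp
  then show ?thesis by (simp add: odd_pole_term_def pole_dist_sq_def)
qed

lemma abs_of_int_le_square: "\<bar>real_of_int k\<bar> \<le> (real_of_int k)\<^sup>2"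
proof (cases "k = 0")
  case False
  then have "\<bar>real_of_int k\<bar> * 1 \<le> \<bar>real_of_int k\<bar> * \<bar>real_of_int k\<bar>"
    by (intro mult_left_mono) auto
  then show ?thesis by (simp add: power2_eq_square abs_mult_self_eq)
qed simp

lemma odd_pole_term_diff_bound:
  assumes t: "t > 0"
  shows "\<bar>odd_pole_term t k - odd_pole_term t (k - 1)\<bar> \<le> 2 * pi\<^sup>2 / pole_dist_sq t (k - 1)"
proof -
  define x where "x = real_of_int k"
  define Q Q' where "Q = pole_dist_sq t k" and "Q' = pole_dist_sq t (k - 1)"
  have Q: "Q = t\<^sup>2 + pi\<^sup>2 * x\<^sup>2" "Q' = t\<^sup>2 + pi\<^sup>2 * (x - 1)\<^sup>2" and pos: "Q > 0" "Q' > 0"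
    using t by (simp_all add: Q_def Q'_def x_def pole_dist_sq_def add_pos_nonneg)
  have "odd_pole_term t k - odd_pole_term t (k - 1) = (pi\<^sup>2 * x * Q' - pi\<^sup>2 * (x - 1) * Q) / (Q * Q')"
    using pos by (simp add: odd_pole_term_def Q_def Q'_def x_def diff_frac_eq)
  also have "pi\<^sup>2 * x * Q' - pi\<^sup>2 * (x - 1) * Q = pi\<^sup>2 * (t\<^sup>2 - pi\<^sup>2 * x * (x - 1))"
    unfolding Q by (simp add: algebra_simps power2_eq_square)
  finally have diff: "odd_pole_term t k - odd_pole_term t (k - 1) = pi\<^sup>2 * (t\<^sup>2 - pi\<^sup>2 * x * (x - 1)) / (Q * Q')" .
  have bound: "\<bar>t\<^sup>2 - pi\<^sup>2 * x * (x - 1)\<bar> \<le> 2 * Q"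
  proof -
    have "\<bar>x * (x - 1)\<bar> \<le> 2 * x\<^sup>2"
      using abs_of_int_le_square[of k] by (simp add: x_def abs_mult power2_eq_square algebra_simps)
    then have "pi\<^sup>2 * \<bar>x * (x - 1)\<bar> \<le> pi\<^sup>2 * (2 * x\<^sup>2)" by (intro mult_left_mono) auto
    moreover have "\<bar>t\<^sup>2 - pi\<^sup>2 * x * (x - 1)\<bar> \<le> t\<^sup>2 + pi\<^sup>2 * \<bar>x * (x - 1)\<bar>"
      by (rule order_trans[OF abs_triangle_ineq4]) (simp add: abs_mult mult.assoc)
    moreover have "t\<^sup>2 \<ge> 0" "pi\<^sup>2 * (2 * x\<^sup>2) = 2 * (pi\<^sup>2 * x\<^sup>2)" by simp_all
    ultimately show ?thesis unfolding Q by (smt (verit))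
  qed
  have "\<bar>odd_pole_term t k - odd_pole_term t (k - 1)\<bar> = pi\<^sup>2 * \<bar>t\<^sup>2 - pi\<^sup>2 * x * (x - 1)\<bar> / (Q * Q')"
    using pos by (simp add: diff abs_mult abs_divide)
  also have "\<dots> \<le> pi\<^sup>2 * (2 * Q) / (Q * Q')"
    using pos bound by (intro divide_right_mono mult_left_mono) auto
  also have "\<dots> = 2 * pi\<^sup>2 / Q'" using pos by (simp add: field_simps)
  finally show ?thesis by (simp add: Q'_def)
qed

lemma odd_pole_term_telescoping:
  assumes t: "t > 0"
  shows "((\<lambda>k. odd_pole_term t k - odd_pole_term t (k - 1)) has_sum 0) UNIV"
proof (rule telescoping_has_sum_0)
  have "((\<lambda>k. 1 / pole_dist_sq t k) has_sum (cosh t / (t * sinh t))) UNIV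
      \<longleftrightarrow> ((\<lambda>k. 1 / pole_dist_sq t (k - 1)) has_sum (cosh t / (t * sinh t))) UNIV"
    by (rule has_sum_reindex_bij_witness[where j="\<lambda>k. k + 1" and i="\<lambda>k. k - 1"]) auto
  then have "(\<lambda>k. 1 / pole_dist_sq t (k - 1)) summable_on UNIV"
    using coth_partial_fractions[OF t] has_sum_imp_summable by blast
  then have "(\<lambda>k. 2 * pi\<^sup>2 * (1 / pole_dist_sq t (k - 1))) summable_on UNIV"
    by (rule summable_on_cmult_right)
  then show "(\<lambda>k. odd_pole_term t k - odd_pole_term t (k - 1)) summable_on UNIV"
    by (rule summable_on_real_dominated) (use odd_pole_term_diff_bound[OF t] in simp)
  show "(\<lambda>N::nat. odd_pole_term t (- int N)) \<longlonglongrightarrow> 0"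
    using tendsto_minus[OF odd_pole_term_tendsto_0[of t]] by (simp add: odd_pole_term_minus)
qed (rule odd_pole_term_tendsto_0)

lemma odd_pole_term_minus_inverse_has_sum_0:
  assumes t: "t > 0"
  shows "((\<lambda>j. odd_pole_term t j - 1 / real_of_int j) has_sum 0) (UNIV - {0})"
proof -
  have "\<bar>odd_pole_term t j - 1 / real_of_int j\<bar> \<le> t\<^sup>2 * (1 / pole_dist_sq t j)" if j: "j \<noteq> 0" for j
  proof -
    have pos: "pole_dist_sq t j > 0" using t by (simp add: pole_dist_sq_pos)
    have "odd_pole_term t j - 1 / real_of_int j
        = (pi\<^sup>2 * real_of_int j * real_of_int j - 1 * pole_dist_sq t j) / (pole_dist_sq t j * real_of_int j)"
      using j pos by (simp add: odd_pole_term_def diff_frac_eq)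
    also have "\<dots> = - t\<^sup>2 / (real_of_int j * pole_dist_sq t j)"
      by (simp add: pole_dist_sq_def power2_eq_square mult.commute)
    finally have "odd_pole_term t j - 1 / real_of_int j = - t\<^sup>2 / (real_of_int j * pole_dist_sq t j)" .
    moreover have "1 * pole_dist_sq t j \<le> \<bar>real_of_int j\<bar> * pole_dist_sq t j"
      using j pos by (intro mult_right_mono) auto
    ultimately show ?thesis using pos
      by (simp add: abs_mult abs_divide) (intro divide_left_mono, auto)
  qed
  moreover have "(\<lambda>j. 1 / pole_dist_sq t j) summable_on (UNIV - {0})"
    using coth_partial_fractions[OF t] has_sum_imp_summable summable_on_subset by blast
  then have "(\<lambda>j. t\<^sup>2 * (1 / pole_dist_sq t j)) summable_on (UNIV - {0})"
    by (rule summable_on_cmult_right)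
  ultimately obtain S where S: "((\<lambda>j. odd_pole_term t j - 1 / real_of_int j) has_sum S) (UNIV - {0})"
    by (metis (no_types, lifting) DiffE singletonI summable_on_def summable_on_real_dominated)
  moreover have "S = 0" by (rule has_sum_odd_eq_0[OF S]) (auto simp: odd_pole_term_minus)
  ultimately show ?thesis by simp
qed

lemma inverse_pole_dist_sq_partial_fractions:
  assumes t: "t > 0" and k: "k \<noteq> n"
  defines "f \<equiv> odd_pole_term t"
  shows "1 / (real_of_int (n - k) * pole_dist_sq t k)
    = ((f k - f (k - n)) + (f (k - n) - 1 / real_of_int (k - n))) * (1 / pole_dist_sq t n)
      + pi\<^sup>2 * real_of_int n / pole_dist_sq t n * (1 / pole_dist_sq t k)"
proof -
  define D where "D = pole_dist_sq t n"
  have pos: "pole_dist_sq t j > 0" for j using t by (simp add: pole_dist_sq_pos)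
  have nk: "real_of_int (n - k) \<noteq> 0" using k by auto
  have X: "(f k - f (k - n)) + (f (k - n) - 1 / real_of_int (k - n))
      = pi\<^sup>2 * real_of_int k / pole_dist_sq t k + 1 / real_of_int (n - k)"
    by (simp add: f_def odd_pole_term_def) (metis minus_diff_eq minus_divide_right of_int_minus)
  have "((f k - f (k - n)) + (f (k - n) - 1 / real_of_int (k - n))) * (1 / D)
      + pi\<^sup>2 * real_of_int n / D * (1 / pole_dist_sq t k)
      = (pi\<^sup>2 * real_of_int k / pole_dist_sq t k + 1 / real_of_int (n - k)
         + pi\<^sup>2 * real_of_int n / pole_dist_sq t k) / D"
    unfolding X using nk pos[of k] pos[of n] by (simp add: D_def[symmetric] field_simps)
  also have "pi\<^sup>2 * real_of_int k / pole_dist_sq t k + 1 / real_of_int (n - k)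
      + pi\<^sup>2 * real_of_int n / pole_dist_sq t k = D / (real_of_int (n - k) * pole_dist_sq t k)"
    using nk pos[of k] unfolding D_def
    by (simp add: field_simps) (simp add: pole_dist_sq_def algebra_simps power2_eq_square)
  finally show ?thesis using pos[of n] by (simp add: D_def)
qed

text \<open>Sum the partial fractions: the telescoping series of \<open>odd_pole_term\<close>, the odd series
  \<open>odd_pole_term t j - 1/j\<close> and the partial fractions of \<open>coth\<close>.\<close>

lemma hilbert_inverse_pole_dist_sq:
  assumes t: "t > 0" and n: "n > 0"
  shows "((\<lambda>k. 1 / (real_of_int (n - k) * pole_dist_sq t k)) has_sum
      (pi\<^sup>2 * real_of_int n / pole_dist_sq t n * (cosh t / (t * sinh t) - 2 / pole_dist_sq t n))) (UNIV - {n})"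
proof -
  define D C where "D = pole_dist_sq t n" and "C = cosh t / (t * sinh t)"
  let ?f = "odd_pole_term t"
  obtain m where m: "n = int m" using n by (metis less_imp_le nonneg_int_cases)
  have "((\<lambda>k. ?f k - ?f (k - n)) has_sum 0) UNIV"
    unfolding m by (rule telescoping_shift_has_sum_0[OF odd_pole_term_telescoping[OF t]])
  from has_sum_Diff_singleton[OF this, of n]
  have shift: "((\<lambda>k. ?f k - ?f (k - n)) has_sum - ?f n) (UNIV - {n})"
    by (simp add: odd_pole_term_def)
  have "((\<lambda>j. ?f j - 1 / real_of_int j) has_sum 0) (UNIV - {0}) \<longleftrightarrow>
        ((\<lambda>k. ?f (k - n) - 1 / real_of_int (k - n)) has_sum 0) (UNIV - {n})"
    by (rule has_sum_reindex_bij_witness[where j="\<lambda>k. k + n" and i="\<lambda>k. k - n"]) auto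
  then have odd: "((\<lambda>k. ?f (k - n) - 1 / real_of_int (k - n)) has_sum 0) (UNIV - {n})"
    using odd_pole_term_minus_inverse_has_sum_0[OF t] by simp
  have coth: "((\<lambda>k. 1 / pole_dist_sq t k) has_sum (C - 1 / D)) (UNIV - {n})"
    using has_sum_Diff_singleton[OF coth_partial_fractions[OF t], of n] by (simp add: C_def D_def)
  have "((\<lambda>k. ((?f k - ?f (k - n)) + (?f (k - n) - 1 / real_of_int (k - n))) * (1 / D)
      + pi\<^sup>2 * real_of_int n / D * (1 / pole_dist_sq t k)) has_sum
      ((- ?f n + 0) * (1 / D) + pi\<^sup>2 * real_of_int n / D * (C - 1 / D))) (UNIV - {n})"
    by (intro has_sum_add has_sum_cmult_left has_sum_cmult_right shift odd coth)
  moreover have "(- ?f n + 0) * (1 / D) + pi\<^sup>2 * real_of_int n / D * (C - 1 / D)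
      = pi\<^sup>2 * real_of_int n / D * (C - 2 / D)"
    using pole_dist_sq_pos[of t n] t by (simp add: D_def[symmetric] odd_pole_term_def field_simps)
  ultimately show ?thesis
    using inverse_pole_dist_sq_partial_fractions[OF t] unfolding C_def D_def
    by (subst has_sum_cong) auto
qed

definition coth_kernel :: "int \<Rightarrow> real \<Rightarrow> real" where
  "coth_kernel k t = (if k = 0 then cosh t else 0) - t * sinh t / pole_dist_sq t k"

lemma coth_kernel_0: "coth_kernel 0 t = cosh t - sinh t / t"
  by (cases "t = 0") (simp_all add: coth_kernel_def pole_dist_sq_def power2_eq_square)

lemma coth_kernel_nonpos: "t \<ge> 0 \<Longrightarrow> k \<noteq> 0 \<Longrightarrow> coth_kernel k t \<le> 0"
  by (simp add: coth_kernel_def pole_dist_sq_nonneg)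

lemma borel_measurable_sinh [measurable]: "(sinh :: real \<Rightarrow> real) \<in> borel_measurable borel"
  by (intro borel_measurable_continuous_onI continuous_intros)

lemma borel_measurable_cosh [measurable]: "(cosh :: real \<Rightarrow> real) \<in> borel_measurable borel"
  by (intro borel_measurable_continuous_onI continuous_intros)

lemma borel_measurable_coth_kernel [measurable]: "coth_kernel k \<in> borel_measurable borel"
  unfolding coth_kernel_def[abs_def] pole_dist_sq_def by measurable

lemma sinh_partial_fractions:
  assumes t: "t > 0"
  shows "((\<lambda>k. t * sinh t / pole_dist_sq t k) has_sum cosh t) UNIV"
  using has_sum_cmult_right[OF coth_partial_fractions[OF t], of "t * sinh t"] t by simp

lemma coth_kernel_has_sum_0:
  assumes t: "t > 0"
  shows "((\<lambda>k. coth_kernel k t) has_sum 0) UNIV"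
proof -
  have "((\<lambda>k. (if k = 0 then cosh t else 0) - t * sinh t / pole_dist_sq t k) has_sum (cosh t - cosh t)) UNIV"
    by (intro has_sum_diff has_sum_delta sinh_partial_fractions t) auto
  then show ?thesis by (simp add: coth_kernel_def[abs_def])
qed

text \<open>The value is \<open>1/n\<close> times the derivative of \<open>t\<^sup>2 sinh t / pole_dist_sq t n\<close>.\<close>

lemma coth_kernel_hilbert:
  assumes t: "t > 0" and n: "n > 0"
  shows "((\<lambda>k. coth_kernel k t / real_of_int (n - k)) has_sum
     ((t\<^sup>2 * cosh t / pole_dist_sq t n
       + 2 * pi\<^sup>2 * (real_of_int n)\<^sup>2 * t * sinh t / (pole_dist_sq t n)\<^sup>2) / real_of_int n)) (UNIV - {n})"
proof -
  define D where "D = pole_dist_sq t n"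
  have D: "D > 0" "D = t\<^sup>2 + pi\<^sup>2 * (real_of_int n)\<^sup>2"
    using t by (simp_all add: D_def pole_dist_sq_def add_pos_nonneg)
  have "((\<lambda>k. (if k = 0 then cosh t / real_of_int n else 0)
      - t * sinh t * (1 / (real_of_int (n - k) * pole_dist_sq t k))) has_sum
      (cosh t / real_of_int n - t * sinh t * (pi\<^sup>2 * real_of_int n / D * (cosh t / (t * sinh t) - 2 / D))))
      (UNIV - {n})"
    unfolding D_def using n
    by (intro has_sum_diff has_sum_delta has_sum_cmult_right hilbert_inverse_pole_dist_sq t) auto
  moreover have "(if k = 0 then cosh t / real_of_int n else 0)
      - t * sinh t * (1 / (real_of_int (n - k) * pole_dist_sq t k))
      = coth_kernel k t / real_of_int (n - k)" for k
    by (simp add: coth_kernel_def diff_divide_distrib mult.commute)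
  moreover have "cosh t / real_of_int n - t * sinh t * (pi\<^sup>2 * real_of_int n / D * (cosh t / (t * sinh t) - 2 / D))
      = (t\<^sup>2 * cosh t / D + 2 * pi\<^sup>2 * (real_of_int n)\<^sup>2 * t * sinh t / D\<^sup>2) / real_of_int n"
  proof -
    have "c / N - t * s * (pi\<^sup>2 * N / D' * (c / (t * s) - 2 / D'))
        = (t\<^sup>2 * c / D' + 2 * pi\<^sup>2 * N\<^sup>2 * t * s / D'\<^sup>2) / N"
      if "s > 0" "N \<noteq> 0" "D' > 0" "D' = t\<^sup>2 + pi\<^sup>2 * N\<^sup>2" for c s N D' :: real
    proof -
      have "c / N - t * s * (pi\<^sup>2 * N / D' * (c / (t * s) - 2 / D'))
          = c / N - pi\<^sup>2 * N * c / D' + 2 * pi\<^sup>2 * N * t * s / D'\<^sup>2"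
        using t that(1,3) by (simp add: field_simps power2_eq_square)
      also have "c / N - pi\<^sup>2 * N * c / D' = t\<^sup>2 * c / D' / N"
        using that(2,3) by (simp add: field_simps that(4) power2_eq_square)
      finally show ?thesis using that(2) by (simp add: field_simps power2_eq_square)
    qed
    then show ?thesis using t n D by simp
  qed
  ultimately show ?thesis by (simp add: D_def)
qed

lemma sinh_ge_self: "0 \<le> x \<Longrightarrow> x \<le> sinh (x :: real)"
  using real_le_x_sinh by (simp add: sinh_field_def exp_minus)

lemma t_cosh_minus_sinh_ge:
  fixes t :: real
  assumes "t \<ge> 0"
  shows "t ^ 3 / 3 \<le> t * cosh t - sinh t"
proof -
  have "\<exists>d. ((\<lambda>t. t * cosh t - sinh t - t ^ 3 / 3) has_real_derivative d) (at x) \<and> d \<ge> 0"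
    if "0 \<le> x" for x :: real
    using mult_right_mono[OF sinh_ge_self[OF that] that]
    by (auto intro!: exI derivative_eq_intros simp: power2_eq_square mult_left_mono)
  from DERIV_nonneg_imp_nondecreasing[OF assms this] show ?thesis by simp
qed

lemma t_cosh_minus_sinh_le:
  fixes t :: real
  assumes "t \<ge> 0"
  shows "t * cosh t - sinh t \<le> t\<^sup>2 * sinh t"
proof -
  have "\<exists>d. ((\<lambda>t. t\<^sup>2 * sinh t - (t * cosh t - sinh t)) has_real_derivative d) (at x) \<and> d \<ge> 0"
    if "0 \<le> x" for x :: real
    using that cosh_real_ge_1[of x]
    by (auto intro!: exI derivative_eq_intros add_nonneg_nonneg mult_nonneg_nonneg
        simp: power2_eq_square algebra_simps)
  from DERIV_nonneg_imp_nondecreasing[OF assms this] show ?thesis by simp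
qed

lemma coth_kernel_0_ge: "t > 0 \<Longrightarrow> t\<^sup>2 / 3 \<le> coth_kernel 0 t"
  using divide_right_mono[OF t_cosh_minus_sinh_ge, of t t]
  by (simp add: coth_kernel_0 diff_divide_distrib power2_eq_square power3_eq_cube)

lemma coth_kernel_0_le: "t > 0 \<Longrightarrow> coth_kernel 0 t \<le> t * sinh t"
  using divide_right_mono[OF t_cosh_minus_sinh_le, of t t]
  by (simp add: coth_kernel_0 diff_divide_distrib power2_eq_square)

lemma coth_kernel_0_nonneg:
  assumes "t \<ge> 0"
  shows "coth_kernel 0 t \<ge> 0"
proof (cases "t = 0")
  case False
  then show ?thesis using assms coth_kernel_0_ge[of t] zero_le_power2[of t] by linarith
qed (simp add: coth_kernel_def)

lemma coth_kernel_abs_sum_le: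
  assumes t: "t \<ge> 0" and F: "finite F"
  shows "(\<Sum>k\<in>F. \<bar>coth_kernel k t\<bar>) \<le> 2 * coth_kernel 0 t"
proof (cases "t = 0")
  case True
  have "(\<Sum>k\<in>F. \<bar>coth_kernel k t\<bar>) = (\<Sum>k\<in>F. if k = 0 then 1 else 0)"
    using True by (intro sum.cong) (auto simp: coth_kernel_def)
  also have "\<dots> \<le> 1" using F by (simp add: sum.If_cases)
  finally show ?thesis using True by (simp add: coth_kernel_def)
next
  case False
  with t have t: "t > 0" by simp
  define g where "g k = t * sinh t / pole_dist_sq t k" for k
  have g: "g k \<ge> 0" for k using t by (simp add: g_def pole_dist_sq_nonneg)
  have "(g has_sum (cosh t - g 0)) (UNIV - {0})"
    using has_sum_Diff_singleton[OF sinh_partial_fractions[OF t]] by (simp add: g_def[abs_def])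
  moreover have "cosh t - g 0 = coth_kernel 0 t" by (simp add: g_def coth_kernel_def)
  ultimately have "(\<Sum>k\<in>F - {0}. g k) \<le> coth_kernel 0 t"
    using F g by (intro finite_sum_le_has_sum) auto
  moreover have "(\<Sum>k\<in>F. \<bar>coth_kernel k t\<bar>) \<le> coth_kernel 0 t + (\<Sum>k\<in>F - {0}. g k)"
  proof -
    have abs: "\<bar>coth_kernel k t\<bar> = g k" if "k \<noteq> 0" for k
      using that g[of k] by (simp add: coth_kernel_def g_def del: abs_divide abs_mult)
    have "(\<Sum>k\<in>F. \<bar>coth_kernel k t\<bar>) \<le> \<bar>coth_kernel 0 t\<bar> + (\<Sum>k\<in>F - {0}. \<bar>coth_kernel k t\<bar>)"
      using F by (cases "0 \<in> F") (simp_all add: sum.remove)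
    also have "\<dots> = coth_kernel 0 t + (\<Sum>k\<in>F - {0}. g k)"
      using coth_kernel_0_nonneg[of t] t abs by simp
    finally show ?thesis .
  qed
  ultimately show ?thesis by simp
qed

lemma coth_kernel_abs_le: "t \<ge> 0 \<Longrightarrow> \<bar>coth_kernel k t\<bar> \<le> 2 * cosh t"
proof -
  assume t: "t \<ge> 0"
  then have "sinh t / t \<ge> 0" by simp
  then show ?thesis using coth_kernel_abs_sum_le[OF t, of "{k}"] by (simp add: coth_kernel_0)
qed

lemma measurable_dominated_imp_integrable:
  fixes f g :: "real \<Rightarrow> real"
  assumes "f \<in> borel_measurable borel" "g integrable_on S" "\<And>x. x \<in> S \<Longrightarrow> \<bar>f x\<bar> \<le> g x" "S \<in> sets lebesgue"
  shows "f integrable_on S"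
  by (rule measurable_bounded_by_integrable_imp_integrable_real[OF _ assms(2-4)])
     (simp add: assms(1) measurable_completion measurable_restrict_space1)

lemma coth_kernel_integrable: "coth_kernel k integrable_on {0..y}"
proof (rule measurable_dominated_imp_integrable[OF borel_measurable_coth_kernel])
  show "(\<lambda>t. 2 * cosh t) integrable_on {0..y}"
    by (intro integrable_continuous_interval continuous_intros)
qed (auto intro: coth_kernel_abs_le)

definition kernel_primitive :: "int \<Rightarrow> real \<Rightarrow> real" where
  "kernel_primitive k y = integral {0..y} (coth_kernel k)"

lemma kernel_primitive_has_sum_0:
  assumes y: "y \<ge> 0"
  shows "((\<lambda>k. kernel_primitive k y) has_sum 0) UNIV"
proof -
  have "((\<lambda>k. integral {0..y} (coth_kernel k)) has_sum integral {0..y} (\<lambda>_. 0)) UNIV"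
  proof (rule has_sum_integral_dominated[where h="\<lambda>t. 2 * coth_kernel 0 t" and N="{0}"])
    show "((\<lambda>k. coth_kernel k x) has_sum 0) UNIV" if "x \<in> {0..y} - {0}" for x
      using coth_kernel_has_sum_0 that by auto
    show "(\<Sum>k\<in>F. \<bar>coth_kernel k x\<bar>) \<le> 2 * coth_kernel 0 x" if "x \<in> {0..y}" "finite F" for x F
      using coth_kernel_abs_sum_le that by simp
  qed (simp_all add: coth_kernel_integrable infinite_UNIV_int)
  then show ?thesis by (simp add: kernel_primitive_def[abs_def])
qed

lemma abs_divide_le_self: "1 \<le> \<bar>d\<bar> \<Longrightarrow> \<bar>x / d\<bar> \<le> \<bar>x :: real\<bar>"
  by (simp add: abs_divide divide_le_eq mult_le_cancel_left1)

lemma has_real_derivative_square_sinh_div_pole_dist_sq: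
  assumes n: "n \<noteq> 0"
  shows "((\<lambda>t. t\<^sup>2 * sinh t / pole_dist_sq t n) has_real_derivative
    (t\<^sup>2 * cosh t / pole_dist_sq t n + 2 * pi\<^sup>2 * (real_of_int n)\<^sup>2 * t * sinh t / (pole_dist_sq t n)\<^sup>2)) (at t)"
proof -
  have pos: "pole_dist_sq t n > 0" using n by (simp add: pole_dist_sq_pos)
  have "((\<lambda>t. t\<^sup>2 * sinh t / (t\<^sup>2 + pi\<^sup>2 * (real_of_int n)\<^sup>2)) has_real_derivative
      ((2 * t * sinh t + t\<^sup>2 * cosh t) * pole_dist_sq t n - t\<^sup>2 * sinh t * (2 * t)) / (pole_dist_sq t n)\<^sup>2) (at t)"
    using pos by (auto intro!: derivative_eq_intros simp: pole_dist_sq_def power2_eq_square)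
  moreover have "((2 * t * sinh t + t\<^sup>2 * cosh t) * pole_dist_sq t n - t\<^sup>2 * sinh t * (2 * t))
      / (pole_dist_sq t n)\<^sup>2
      = t\<^sup>2 * cosh t / pole_dist_sq t n + 2 * pi\<^sup>2 * (real_of_int n)\<^sup>2 * t * sinh t / (pole_dist_sq t n)\<^sup>2"
  proof -
    have "(2 * t * sinh t + t\<^sup>2 * cosh t) * pole_dist_sq t n - t\<^sup>2 * sinh t * (2 * t)
        = t\<^sup>2 * cosh t * pole_dist_sq t n + 2 * pi\<^sup>2 * (real_of_int n)\<^sup>2 * t * sinh t"
      by (simp add: pole_dist_sq_def algebra_simps power2_eq_square)
    then show ?thesis using pos by (simp add: field_simps power2_eq_square)
  qed
  ultimately show ?thesis by (simp add: pole_dist_sq_def)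
qed

lemma kernel_primitive_hilbert:
  assumes y: "y \<ge> 0" and n: "n > 0"
  shows "((\<lambda>k. kernel_primitive k y / real_of_int (n - k)) has_sum
      (y\<^sup>2 * sinh y / (real_of_int n * pole_dist_sq y n))) (UNIV - {n})"
proof -
  define \<phi> where "\<phi> t = t\<^sup>2 * cosh t / pole_dist_sq t n
      + 2 * pi\<^sup>2 * (real_of_int n)\<^sup>2 * t * sinh t / (pole_dist_sq t n)\<^sup>2" for t
  have "((\<lambda>t. t\<^sup>2 * sinh t / pole_dist_sq t n) has_real_derivative \<phi> t) (at t)" for t
    using has_real_derivative_square_sinh_div_pole_dist_sq[of n t] n by (simp add: \<phi>_def)
  then have "(\<phi> has_integral (y\<^sup>2 * sinh y / pole_dist_sq y n)) {0..y}"
    using fundamental_theorem_of_calculus[OF y, of "\<lambda>t. t\<^sup>2 * sinh t / pole_dist_sq t n" \<phi>]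
    by (auto simp: has_real_derivative_iff_has_vector_derivative intro: has_vector_derivative_at_within)
  then have int: "integral {0..y} \<phi> = y\<^sup>2 * sinh y / pole_dist_sq y n"
    by (rule integral_unique)
  have "((\<lambda>k. integral {0..y} (\<lambda>t. coth_kernel k t / real_of_int (n - k))) has_sum
      integral {0..y} (\<lambda>t. \<phi> t / real_of_int n)) (UNIV - {n})"
  proof (rule has_sum_integral_dominated[where h="\<lambda>t. 2 * coth_kernel 0 t" and N="{0}"])
    show "(\<lambda>t. coth_kernel k t / real_of_int (n - k)) integrable_on {0..y}" for k
      by (rule integrable_on_divide[OF coth_kernel_integrable])
    show "(\<Sum>k\<in>F. \<bar>coth_kernel k x / real_of_int (n - k)\<bar>) \<le> 2 * coth_kernel 0 x"
      if "x \<in> {0..y}" "finite F" "F \<subseteq> UNIV - {n}" for x F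
    proof -
      have "(\<Sum>k\<in>F. \<bar>coth_kernel k x / real_of_int (n - k)\<bar>) \<le> (\<Sum>k\<in>F. \<bar>coth_kernel k x\<bar>)"
        using that by (intro sum_mono abs_divide_le_self) auto
      also have "\<dots> \<le> 2 * coth_kernel 0 x" using coth_kernel_abs_sum_le that by auto
      finally show ?thesis .
    qed
    show "((\<lambda>k. coth_kernel k x / real_of_int (n - k)) has_sum \<phi> x / real_of_int n) (UNIV - {n})"
      if "x \<in> {0..y} - {0}" for x
      using coth_kernel_hilbert[of x n] that n by (auto simp: \<phi>_def)
  qed (simp_all add: coth_kernel_integrable infinite_UNIV_int)
  then show ?thesis by (simp add: kernel_primitive_def integral_divide int mult.commute)
qed

lemma mono_integral_from_0:
  fixes f :: "real \<Rightarrow> real"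
  assumes int: "\<And>y. f integrable_on {0..y}" and nonneg: "\<And>t. t \<ge> 0 \<Longrightarrow> f t \<ge> 0"
  shows "mono (\<lambda>y. integral {0..y} f)"
proof (rule monoI)
  fix a b :: real assume ab: "a \<le> b"
  show "integral {0..a} f \<le> integral {0..b} f"
  proof (cases "a < 0")
    case True
    have "integral {0..b} f \<ge> 0" by (rule integral_nonneg[OF int]) (use nonneg in auto)
    then show ?thesis using True by simp
  next
    case False
    then show ?thesis using ab nonneg by (intro integral_subset_le int) auto
  qed
qed

lemma borel_measurable_kernel_primitive [measurable]: "kernel_primitive k \<in> borel_measurable borel"
proof (cases "k = 0")
  case True
  have "mono (kernel_primitive 0)" unfolding kernel_primitive_def[abs_def]
    by (rule mono_integral_from_0[OF coth_kernel_integrable coth_kernel_0_nonneg])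
  then show ?thesis using True borel_measurable_mono by blast
next
  case False
  have "mono (\<lambda>y. integral {0..y} (\<lambda>t. - coth_kernel k t))"
    by (rule mono_integral_from_0)
       (use coth_kernel_integrable coth_kernel_nonpos False in \<open>auto intro!: integrable_neg\<close>)
  then have "(\<lambda>y. - integral {0..y} (\<lambda>t. - coth_kernel k t)) \<in> borel_measurable borel"
    using borel_measurable_mono borel_measurable_uminus by blast
  then show ?thesis by (simp add: kernel_primitive_def[abs_def])
qed

lemma kernel_primitive_abs_sum_le:
  assumes y: "y \<ge> 0" and F: "finite F"
  shows "(\<Sum>k\<in>F. \<bar>kernel_primitive k y\<bar>) \<le> 2 * kernel_primitive 0 y"
proof -
  have abs_int: "(\<lambda>t. \<bar>coth_kernel k t\<bar>) integrable_on {0..y}" for k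
  proof (rule measurable_dominated_imp_integrable)
    show "(\<lambda>t. 2 * cosh t) integrable_on {0..y}"
      by (intro integrable_continuous_interval continuous_intros)
  qed (auto intro: coth_kernel_abs_le)
  have "(\<Sum>k\<in>F. \<bar>kernel_primitive k y\<bar>) \<le> (\<Sum>k\<in>F. integral {0..y} (\<lambda>t. \<bar>coth_kernel k t\<bar>))"
    unfolding kernel_primitive_def
    by (intro sum_mono) (use integral_norm_bound_integral[OF coth_kernel_integrable abs_int] in simp)
  also have "\<dots> = integral {0..y} (\<lambda>t. \<Sum>k\<in>F. \<bar>coth_kernel k t\<bar>)"
    by (rule integral_sum[symmetric]) (use F abs_int in auto)
  also have "\<dots> \<le> integral {0..y} (\<lambda>t. 2 * coth_kernel 0 t)"
    by (rule integral_le) (use F abs_int coth_kernel_integrable coth_kernel_abs_sum_le in \<open>auto intro!: integrable_sum\<close>)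
  also have "\<dots> = 2 * kernel_primitive 0 y" by (simp add: kernel_primitive_def)
  finally show ?thesis .
qed

lemma integral_le_except_negligible:
  fixes f g :: "'a::euclidean_space \<Rightarrow> real"
  assumes f: "f integrable_on S" and g: "g integrable_on S" and N: "negligible N"
    and le: "\<And>x. x \<in> S - N \<Longrightarrow> f x \<le> g x"
  shows "integral S f \<le> integral S g"
proof -
  define f' where "f' x = (if x \<in> N then g x else f x)" for x
  have "integral S f = integral S f'" by (rule integral_spike[OF N]) (simp add: f'_def)
  also have "\<dots> \<le> integral S g"
    using integrable_spike[OF f N, of f'] g le by (intro integral_le) (auto simp: f'_def)
  finally show ?thesis .
qed

lemma has_integral_square_div_3:
  assumes "(y::real) \<ge> 0"
  shows "((\<lambda>t. t\<^sup>2 / 3) has_integral (y ^ 3 / 9)) {0..y}"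
proof -
  have "((\<lambda>t. t\<^sup>2 / 3) has_integral (y ^ 3 / 9 - 0 ^ 3 / 9)) {0..y}"
    by (rule fundamental_theorem_of_calculus[OF assms])
       (auto intro!: derivative_eq_intros intro: has_vector_derivative_at_within
         simp: has_real_derivative_iff_has_vector_derivative[symmetric] power2_eq_square)
  then show ?thesis by simp
qed

lemma kernel_primitive_0_ge:
  assumes y: "y \<ge> 0"
  shows "y ^ 3 / 9 \<le> kernel_primitive 0 y"
proof -
  have "y ^ 3 / 9 = integral {0..y} (\<lambda>t. t\<^sup>2 / 3)"
    by (rule integral_unique[symmetric, OF has_integral_square_div_3[OF y]])
  also have "\<dots> \<le> integral {0..y} (coth_kernel 0)"
  proof (rule integral_le)
    show "t\<^sup>2 / 3 \<le> coth_kernel 0 t" if "t \<in> {0..y}" for t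
      using coth_kernel_0_ge[of t] that by (cases "t = 0") (auto simp: coth_kernel_def)
  qed (use has_integral_square_div_3[OF y] coth_kernel_integrable in blast)+
  finally show ?thesis by (simp add: kernel_primitive_def)
qed

lemma kernel_primitive_0_le:
  assumes y: "y \<ge> 0"
  shows "kernel_primitive 0 y \<le> y\<^sup>2 * sinh y"
proof -
  have "integral {0..y} (coth_kernel 0) \<le> integral {0..y} (\<lambda>t. y * sinh y)"
  proof (rule integral_le_except_negligible[where N="{0}"])
    show "coth_kernel 0 t \<le> y * sinh y" if "t \<in> {0..y} - {0}" for t
    proof -
      have "coth_kernel 0 t \<le> t * sinh t" using coth_kernel_0_le[of t] that by auto
      also have "\<dots> \<le> y * sinh y" using that by (intro mult_mono) auto
      finally show ?thesis .
    qed
  qed (auto simp: coth_kernel_integrable)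
  then show ?thesis using y by (simp add: kernel_primitive_def power2_eq_square mult.commute mult.left_commute)
qed

lemma kernel_primitive_le:
  assumes y: "y \<ge> 0" and k: "k \<noteq> 0"
  shows "kernel_primitive k y \<le> - (y ^ 3 / 9) / pole_dist_sq y k"
proof -
  have Qy: "pole_dist_sq y k > 0" using k by (simp add: pole_dist_sq_pos)
  have "integral {0..y} (\<lambda>t. t\<^sup>2 / 3 / pole_dist_sq y k) \<le> integral {0..y} (\<lambda>t. - coth_kernel k t)"
  proof (rule integral_le)
    show "(\<lambda>t. - coth_kernel k t) integrable_on {0..y}"
      by (rule integrable_neg[OF coth_kernel_integrable])
    show "(\<lambda>t. t\<^sup>2 / 3 / pole_dist_sq y k) integrable_on {0..y}"
      by (intro integrable_continuous_interval continuous_intros) (use Qy in auto)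
    show "t\<^sup>2 / 3 / pole_dist_sq y k \<le> - coth_kernel k t" if "t \<in> {0..y}" for t
    proof -
      have Qt: "pole_dist_sq t k > 0" using k by (simp add: pole_dist_sq_pos)
      have "t\<^sup>2 / 3 / pole_dist_sq y k \<le> t\<^sup>2 / pole_dist_sq y k" using Qy by (intro divide_right_mono) auto
      also have "\<dots> \<le> t\<^sup>2 / pole_dist_sq t k"
        using Qt Qy that by (intro divide_left_mono pole_dist_sq_mono) auto
      also have "\<dots> \<le> t * sinh t / pole_dist_sq t k"
        using sinh_ge_self[of t] that Qt by (intro divide_right_mono) (auto simp: power2_eq_square mult_left_mono)
      finally show ?thesis using k by (simp add: coth_kernel_def)
    qed
  qed
  moreover have "integral {0..y} (\<lambda>t. t\<^sup>2 / 3 / pole_dist_sq y k) = (y ^ 3 / 9) / pole_dist_sq y k"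
    using integral_unique[OF has_integral_divide[OF has_integral_square_div_3[OF y]]] .
  ultimately show ?thesis by (simp add: kernel_primitive_def)
qed

definition weight :: "real \<Rightarrow> real" where
  "weight y = 2 * y / (sinh y) ^ 3"

lemma borel_measurable_weight [measurable]: "weight \<in> borel_measurable borel"
  unfolding weight_def[abs_def] by measurable

lemma weight_nonneg: "y \<ge> 0 \<Longrightarrow> weight y \<ge> 0"
  by (simp add: weight_def)

lemma sinh_ge_exp_half:
  fixes y :: real
  assumes y: "y \<ge> 0"
  shows "y * exp (y / 2) / 2 \<le> sinh y"
proof -
  have "(y / 2) * (exp (y / 2) / 2) \<le> sinh (y / 2) * cosh (y / 2)"
    using sinh_ge_self[of "y / 2"] y by (intro mult_mono) (auto simp: cosh_field_def)
  then show ?thesis using sinh_double[of "y / 2"] by simp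
qed

lemma weight_kernel_primitive_0_le_exp:
  assumes y: "y \<ge> 0"
  shows "2 * weight y * kernel_primitive 0 y \<le> 32 * exp (- (1 / 2) * y)"
proof (cases "y = 0")
  case True then show ?thesis by (simp add: weight_def)
next
  case False
  with y have y: "y > 0" by simp
  have "2 * weight y * kernel_primitive 0 y \<le> 2 * weight y * (y\<^sup>2 * sinh y)"
    using kernel_primitive_0_le weight_nonneg y by (intro mult_left_mono) auto
  also have "\<dots> = 4 * y ^ 3 / (sinh y)\<^sup>2"
    using y by (simp add: weight_def field_simps power2_eq_square power3_eq_cube)
  also have "\<dots> \<le> 4 * y ^ 3 / (y\<^sup>2 * exp y / 4)"
  proof -
    have "(y * exp (y / 2) / 2)\<^sup>2 \<le> (sinh y)\<^sup>2"
      using sinh_ge_exp_half[of y] y by (intro power_mono) auto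
    moreover have "(y * exp (y / 2) / 2)\<^sup>2 = y\<^sup>2 * exp y / 4"
      by (simp add: power_mult_distrib power_divide power2_eq_square flip: exp_add)
    ultimately show ?thesis using y by (intro divide_left_mono) auto
  qed
  also have "\<dots> = 16 * y * exp (- y)"
    using y by (simp add: field_simps power2_eq_square power3_eq_cube exp_minus)
  also have "\<dots> \<le> 16 * (2 * exp (y / 2)) * exp (- y)"
  proof -
    have "y \<le> 2 * exp (y / 2)" using exp_ge_add_one_self[of "y / 2"] by linarith
    then show ?thesis by (intro mult_right_mono) auto
  qed
  also have "\<dots> = 32 * exp (- (1 / 2) * y)"
    by (simp flip: exp_add)
  finally show ?thesis .
qed

lemma weight_kernel_primitive_abs_sum_le:
  assumes y: "y \<ge> 0" and F: "finite F"
  shows "(\<Sum>k\<in>F. \<bar>weight y * kernel_primitive k y\<bar>) \<le> 2 * weight y * kernel_primitive 0 y"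
proof -
  have "(\<Sum>k\<in>F. \<bar>weight y * kernel_primitive k y\<bar>) = weight y * (\<Sum>k\<in>F. \<bar>kernel_primitive k y\<bar>)"
    using weight_nonneg[OF y] by (simp add: abs_mult sum_distrib_left)
  also have "\<dots> \<le> weight y * (2 * kernel_primitive 0 y)"
    using kernel_primitive_abs_sum_le[OF y F] weight_nonneg[OF y] by (intro mult_left_mono) auto
  finally show ?thesis by simp
qed

lemma integrable_weight_kernel_primitive:
  "(\<lambda>y. weight y * kernel_primitive k y) integrable_on {0..}"
proof (rule measurable_dominated_imp_integrable)
  have "(\<lambda>y::real. exp (- (1 / 2) * y)) integrable_on {0..}"
    using integrable_on_exp_minus_to_infinity[of "1 / 2" 0] by simp
  then show "(\<lambda>y::real. 32 * exp (- (1 / 2) * y)) integrable_on {0..}" by simp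
  show "\<bar>weight y * kernel_primitive k y\<bar> \<le> 32 * exp (- (1 / 2) * y)" if "y \<in> {0..}" for y
    using weight_kernel_primitive_abs_sum_le[of y "{k}"] weight_kernel_primitive_0_le_exp[of y] that by auto
qed auto

lemma calE_eq_integral: "calE k = integral {0..} (\<lambda>y. weight y * kernel_primitive k y)"
proof (cases "k = 0")
  case False
  then have "kernel_primitive k y = - integral {0..y} (\<lambda>t. t * sinh t / (t\<^sup>2 + pi\<^sup>2 * (real_of_int k)\<^sup>2))" for y
    by (simp add: kernel_primitive_def coth_kernel_def[abs_def] pole_dist_sq_def)
  then have "(\<lambda>y. weight y * kernel_primitive k y) = (\<lambda>y. - (2 * y / (sinh y) ^ 3 *
      integral {0..y} (\<lambda>t. t * sinh t / (t\<^sup>2 + pi\<^sup>2 * (real_of_int k)\<^sup>2))))"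
    by (auto simp: weight_def)
  then show ?thesis using False by (simp add: calE_def)
next
  case True
  have eq: "2 * y / (sinh y) ^ 3 * (sinh y - integral {0..y} (\<lambda>t. sinh t / t)) = weight y * kernel_primitive 0 y"
    if "y \<in> {0..}" for y
  proof -
    have cosh: "(cosh has_integral (sinh y - sinh 0)) {0..y}"
      using that by (intro fundamental_theorem_of_calculus)
        (auto intro!: derivative_eq_intros intro: has_vector_derivative_at_within
          simp: has_real_derivative_iff_has_vector_derivative[symmetric])
    have "(\<lambda>t. cosh t - coth_kernel 0 t) integrable_on {0..y}"
      using cosh coth_kernel_integrable by (blast intro: integrable_diff)
    then have "(\<lambda>t. sinh t / t) integrable_on {0..y}" by (simp add: coth_kernel_0)
    then have "integral {0..y} (\<lambda>t. cosh t - sinh t / t) = sinh y - integral {0..y} (\<lambda>t. sinh t / t)"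
      using cosh by (subst integral_diff) (auto simp: integral_unique)
    then show ?thesis by (simp add: weight_def kernel_primitive_def coth_kernel_0[abs_def])
  qed
  have "calE k = integral {0..} (\<lambda>y. 2 * y / (sinh y) ^ 3 * (sinh y - integral {0..y} (\<lambda>t. sinh t / t)))"
    using True by (simp add: calE_def)
  also have "\<dots> = integral {0..} (\<lambda>y. weight y * kernel_primitive 0 y)" by (rule integral_cong[OF eq])
  finally show ?thesis using True by simp
qed

lemma calE_has_sum_0: "(calE has_sum 0) UNIV"
proof -
  have "((\<lambda>k. integral {0..} (\<lambda>y. weight y * kernel_primitive k y)) has_sum integral {0..} (\<lambda>_::real. 0::real)) UNIV"
  proof (rule has_sum_integral_dominated[where h="\<lambda>y. 2 * weight y * kernel_primitive 0 y" and N="{0}"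
        and \<phi>="\<lambda>k y. weight y * kernel_primitive k y" and \<Phi>="\<lambda>_. 0"])
    show "(\<lambda>y. 2 * weight y * kernel_primitive 0 y) integrable_on {0..}"
      using integrable_on_cmult_left[OF integrable_weight_kernel_primitive[of 0], of 2] by (simp add: mult.assoc)
    show "((\<lambda>k. weight x * kernel_primitive k x) has_sum 0) UNIV" if "x \<in> {0..} - {0}" for x
      using has_sum_cmult_right[OF kernel_primitive_has_sum_0[of x], of "weight x"] that by simp
  qed (simp_all add: weight_kernel_primitive_abs_sum_le integrable_weight_kernel_primitive infinite_UNIV_int)
  then show ?thesis by (simp add: calE_eq_integral[abs_def])
qed

lemma one_le_abs_pi_times_of_int: "m \<noteq> 0 \<Longrightarrow> 1 \<le> \<bar>pi * real_of_int m\<bar>"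
  using pi_gt3 mult_mono[of 1 pi 1 "\<bar>real_of_int m\<bar>"] by (auto simp: abs_mult)

lemma calE_hilbert_pos:
  assumes n: "n > 0"
  shows "((\<lambda>m. calE (n - m) / (pi * real_of_int m)) has_sum calF n) (UNIV - {0})"
proof -
  define \<Phi> where "\<Phi> y = weight y / pi * (y\<^sup>2 * sinh y / (real_of_int n * pole_dist_sq y n))" for y
  have "((\<lambda>k. integral {0..} (\<lambda>y. weight y * kernel_primitive k y / (pi * real_of_int (n - k))))
      has_sum integral {0..} \<Phi>) (UNIV - {n})"
  proof (rule has_sum_integral_dominated[where h="\<lambda>y. 2 * weight y * kernel_primitive 0 y" and N="{0}"])
    show "(\<lambda>y. 2 * weight y * kernel_primitive 0 y) integrable_on {0..}"
      using integrable_on_cmult_left[OF integrable_weight_kernel_primitive[of 0], of 2] by (simp add: mult.assoc)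
    show "(\<lambda>y. weight y * kernel_primitive k y / (pi * real_of_int (n - k))) integrable_on {0..}" for k
      by (rule integrable_on_divide[OF integrable_weight_kernel_primitive])
    show "(\<Sum>k\<in>F. \<bar>weight x * kernel_primitive k x / (pi * real_of_int (n - k))\<bar>) \<le> 2 * weight x * kernel_primitive 0 x"
      if "x \<in> {0..}" "finite F" "F \<subseteq> UNIV - {n}" for x F
    proof -
      have "(\<Sum>k\<in>F. \<bar>weight x * kernel_primitive k x / (pi * real_of_int (n - k))\<bar>)
          \<le> (\<Sum>k\<in>F. \<bar>weight x * kernel_primitive k x\<bar>)"
        using that by (intro sum_mono abs_divide_le_self one_le_abs_pi_times_of_int) auto
      also have "\<dots> \<le> 2 * weight x * kernel_primitive 0 x"
        using weight_kernel_primitive_abs_sum_le that by auto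
      finally show ?thesis .
    qed
    show "((\<lambda>k. weight x * kernel_primitive k x / (pi * real_of_int (n - k))) has_sum \<Phi> x) (UNIV - {n})"
      if "x \<in> {0..} - {0}" for x
      using has_sum_cmult_right[OF kernel_primitive_hilbert[of x n], of "weight x / pi"] that n
      by (simp add: \<Phi>_def field_simps)
  qed (simp_all add: infinite_UNIV_int)
  moreover have "integral {0..} \<Phi> = calF n"
  proof -
    have "\<Phi> = (\<lambda>y. 1 / (pi * real_of_int n) * (2 * y ^ 3 / ((y\<^sup>2 + pi\<^sup>2 * (real_of_int n)\<^sup>2) * (sinh y)\<^sup>2)))"
      using n by (intro ext, cases "y = 0")
        (auto simp: \<Phi>_def weight_def pole_dist_sq_def field_simps power2_eq_square power3_eq_cube)
    then show ?thesis using n by (simp only: integral_mult_right calF_def) simp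
  qed
  ultimately have "((\<lambda>k. calE k / (pi * real_of_int (n - k))) has_sum calF n) (UNIV - {n})"
    by (simp add: calE_eq_integral)
  moreover have "((\<lambda>k. calE k / (pi * real_of_int (n - k))) has_sum calF n) (UNIV - {n}) \<longleftrightarrow>
      ((\<lambda>m. calE (n - m) / (pi * real_of_int m)) has_sum calF n) (UNIV - {0})"
    by (rule has_sum_reindex_bij_witness[where j="\<lambda>m. n - m" and i="\<lambda>k. n - k"]) auto
  ultimately show ?thesis by simp
qed

lemma integral_pos_of_ge_on_interval:
  fixes f :: "real \<Rightarrow> real"
  assumes int: "f integrable_on {0..}" and nonneg: "\<And>y. y \<ge> 0 \<Longrightarrow> f y \<ge> 0"
    and ab: "0 \<le> a" "a < b" and c: "c > 0" and lb: "\<And>y. y \<in> {a..b} \<Longrightarrow> c \<le> f y"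
  shows "integral {0..} f > 0"
proof -
  have int_ab: "f integrable_on {a..b}" by (rule integrable_on_subinterval[OF int]) (use ab in auto)
  have "0 < (b - a) * c" using ab c by simp
  also have "\<dots> = integral {a..b} (\<lambda>_. c)" using ab by simp
  also have "\<dots> \<le> integral {a..b} f" by (rule integral_le) (use int_ab lb in auto)
  also have "\<dots> \<le> integral {0..} f" by (rule integral_subset_le) (use ab int_ab int nonneg in auto)
  finally show ?thesis .
qed

lemma weight_ge_on_1_2:
  assumes y: "y \<in> {1..2}"
  shows "2 / (sinh 2) ^ 3 \<le> weight y"
proof -
  have pos: "sinh y > 0" using y by simp
  have "2 / (sinh 2) ^ 3 \<le> 2 / (sinh y) ^ 3" using y pos by (intro divide_left_mono power_mono) auto
  also have "\<dots> \<le> 2 * y / (sinh y) ^ 3" using y pos by (intro divide_right_mono) auto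
  finally show ?thesis by (simp add: weight_def)
qed

lemma calE_0_pos: "calE 0 > 0"
proof -
  have "integral {0..} (\<lambda>y. weight y * kernel_primitive 0 y) > 0"
  proof (rule integral_pos_of_ge_on_interval[OF integrable_weight_kernel_primitive, where a=1 and b=2])
    show "0 \<le> weight y * kernel_primitive 0 y" if "y \<ge> 0" for y
    proof -
      have "0 \<le> y ^ 3 / 9" using that by simp
      then have "0 \<le> kernel_primitive 0 y" using kernel_primitive_0_ge[OF that] by linarith
      then show ?thesis using weight_nonneg[OF that] by simp
    qed
    show "2 / (sinh 2) ^ 3 * (1 / 9) \<le> weight y * kernel_primitive 0 y" if "y \<in> {1..2}" for y
    proof (rule mult_mono)
      have "1 \<le> y ^ 3" using that by (simp add: one_le_power)
      moreover have "y ^ 3 / 9 \<le> kernel_primitive 0 y" using that kernel_primitive_0_ge[of y] by simp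
      ultimately show "1 / 9 \<le> kernel_primitive 0 y" by linarith
    qed (use that weight_ge_on_1_2 weight_nonneg in auto)
  qed simp_all
  then show ?thesis by (simp add: calE_eq_integral)
qed

lemma calE_neg:
  assumes k: "k \<noteq> 0"
  shows "calE k < 0"
proof -
  have Q2: "pole_dist_sq 2 k > 0" using k by (simp add: pole_dist_sq_pos)
  have le: "kernel_primitive k y \<le> - (y ^ 3 / 9) / pole_dist_sq y k" if "y \<ge> 0" for y
    by (rule kernel_primitive_le[OF that k])
  have "integral {0..} (\<lambda>y. - (weight y * kernel_primitive k y)) > 0"
  proof (rule integral_pos_of_ge_on_interval[where a=1 and b=2 and c="2 / (sinh 2) ^ 3 * (1 / 9 / pole_dist_sq 2 k)"])
    show "(\<lambda>y. - (weight y * kernel_primitive k y)) integrable_on {0..}"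
      by (rule integrable_neg[OF integrable_weight_kernel_primitive])
    show "0 \<le> - (weight y * kernel_primitive k y)" if "y \<ge> 0" for y
    proof -
      have "0 \<le> (y ^ 3 / 9) / pole_dist_sq y k" using that by (simp add: pole_dist_sq_nonneg)
      then have "kernel_primitive k y \<le> 0" using le[OF that] by linarith
      then show ?thesis using weight_nonneg[OF that] by (simp add: mult_nonneg_nonpos)
    qed
    show "2 / (sinh 2) ^ 3 * (1 / 9 / pole_dist_sq 2 k) \<le> - (weight y * kernel_primitive k y)"
      if y: "y \<in> {1..2}" for y
    proof -
      have Qy: "pole_dist_sq y k > 0" using k by (simp add: pole_dist_sq_pos)
      have "1 / 9 / pole_dist_sq 2 k \<le> 1 / 9 / pole_dist_sq y k"
        using Qy Q2 y by (intro divide_left_mono pole_dist_sq_mono) auto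
      also have "\<dots> \<le> (y ^ 3 / 9) / pole_dist_sq y k"
        using Qy y one_le_power[of y 3] by (intro divide_right_mono) auto
      also have "\<dots> \<le> - kernel_primitive k y" using le[of y] y by simp
      finally have "1 / 9 / pole_dist_sq 2 k \<le> - kernel_primitive k y" .
      then have "2 / (sinh 2) ^ 3 * (1 / 9 / pole_dist_sq 2 k) \<le> weight y * (- kernel_primitive k y)"
        by (rule mult_mono[OF weight_ge_on_1_2[OF y]]) (use y weight_nonneg Q2 in auto)
      then show ?thesis by simp
    qed
  qed (use Q2 in simp_all)
  then show ?thesis by (simp add: calE_eq_integral)
qed

lemma calE_minus: "calE (- k) = calE k"
  by (simp add: calE_def)

lemma calF_minus: "calF (- k) = - calF k"
  by (simp add: calF_def)

lemma hilbert_transform_of_even: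
  fixes E F :: "int \<Rightarrow> real"
  assumes even: "\<And>k. E (- k) = E k" and odd: "\<And>k. F (- k) = - F k"
    and abs: "(\<lambda>k. \<bar>E k\<bar>) summable_on UNIV"
    and pos: "\<And>n. n > 0 \<Longrightarrow> ((\<lambda>m. E (n - m) / (pi * real_of_int m)) has_sum F n) (UNIV - {0})"
  shows "((\<lambda>m. E (n - m) / (pi * real_of_int m)) has_sum F n) (UNIV - {0})"
proof -
  consider "n > 0" | "n = 0" | "n < 0" by linarith
  then show ?thesis
  proof cases
    case 1
    then show ?thesis by (rule pos)
  next
    case 2
    have "(\<lambda>m. E (- m) / (pi * real_of_int m)) summable_on (UNIV - {0})"
    proof (rule summable_on_real_dominated)
      show "(\<lambda>m. \<bar>E (- m)\<bar>) summable_on (UNIV - {0})"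
        using abs summable_on_subset by (fastforce simp: even)
      show "\<bar>E (- m) / (pi * real_of_int m)\<bar> \<le> \<bar>E (- m)\<bar>" if "m \<in> UNIV - {0}" for m
        using that by (intro abs_divide_le_self one_le_abs_pi_times_of_int) auto
    qed
    then obtain S where S: "((\<lambda>m. E (- m) / (pi * real_of_int m)) has_sum S) (UNIV - {0})"
      by (auto simp: summable_on_def)
    moreover have "S = 0" by (rule has_sum_odd_eq_0[OF S]) (auto simp: even)
    moreover have "F 0 = 0" using odd[of 0] by simp
    ultimately show ?thesis using 2 by simp
  next
    case 3
    have E: "E (- n - m) = E (n + m)" for m using even[of "n + m"] by simp
    have "((\<lambda>m. E (- n - m) / (pi * real_of_int m)) has_sum F (- n)) (UNIV - {0}) \<longleftrightarrow>
        ((\<lambda>m. - (E (n - m) / (pi * real_of_int m))) has_sum F (- n)) (UNIV - {0})"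
      by (rule has_sum_reindex_bij_witness[where j=uminus and i=uminus])
        (auto simp: E algebra_simps)
    then have "((\<lambda>m. - (E (n - m) / (pi * real_of_int m))) has_sum F (- n)) (UNIV - {0})"
      using pos[of "- n"] 3 by simp
    from has_sum_uminusI[OF this] show ?thesis by (simp add: odd)
  qed
qed

theorem lemma3p15:
  shows "(\<forall>n::int. ((\<lambda>m::int. calE (n - m) / (pi * real_of_int m)) has_sum (calF n)) (UNIV - {0}))
    \<and> 0 < calE 0
    \<and> (\<forall>n::int. n \<noteq> 0 \<longrightarrow> calE n < 0)
    \<and> ((\<lambda>n. \<bar>calE n\<bar>) summable_on UNIV)
    \<and> (calE has_sum 0) UNIV"
proof (intro conjI allI impI)
  show abs_summable: "(\<lambda>n. \<bar>calE n\<bar>) summable_on UNIV"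
    using has_sum_imp_summable[OF calE_has_sum_0] summable_on_iff_abs_summable_on_real[of calE] by simp
  show "((\<lambda>m. calE (n - m) / (pi * real_of_int m)) has_sum calF n) (UNIV - {0})" for n
    using hilbert_transform_of_even[OF calE_minus calF_minus abs_summable calE_hilbert_pos] .
  show "calE n < 0" if "n \<noteq> 0" for n
    using that by (rule calE_neg)
qed (simp_all add: calE_0_pos calE_has_sum_0)

end
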